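(* Let $\mathsf{A}=\{A_1,\ldots,A_\ell\}$ be a finite set of $d \times d$ matrices over $\mathbb{C}$, and suppose that $\mathsf{A}$ contains at most one element with rank greater than or equal to two. Then there exist an integer $n\geq 1$ and indices $i_1,\ldots,i_n \in \{1,\ldots,\ell\}$ such that each element of $\mathsf{A}$ of rank exactly one appears at most once in the sequence $A_{i_1},\ldots,A_{i_n}$, and \[\varrho(\mathsf{A})=\rho(A_{i_1}\cdots A_{i_n})^{1/n}.\]
   Context: For a square matrix $A$, $\rho(A)$ denotes its ordinary spectral radius. For a nonempty bounded set $\mathsf{A}$ of $d\times d$ complex matrices, the joint spectral radius is \[\varrho(\mathsf{A})=\lim_{n \to \infty} \sup\left\{\left\|A_{i_n} \cdots A_{i_1}\right\|^{1/n} \colon A_{i_j} \in \mathsf{A}\right\},\] where $\|\cdot\|$ is any matrix norm (the limit exists and is independent of the norm). *)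

theory Defs
  imports "HOL-Analysis.Analysis"
begin

definition eigenvalues :: "complex^'d^'d \<Rightarrow> complex set" where
  "eigenvalues A = {c. \<exists>v. v \<noteq> 0 \<and> A *v v = c *s v}"

definition spectral_radius :: "complex^'d^'d \<Rightarrow> real" where
  "spectral_radius A = Max (cmod ` eigenvalues A)"

definition prod_list_mat :: "(complex^'d^'d) list \<Rightarrow> complex^'d^'d" where
  "prod_list_mat ms = foldr (\<lambda>M P. M ** P) ms (mat 1)"

text \<open>Joint spectral radius, with the (submultiplicative) Frobenius norm, which is the
  norm of the type complex^'d^'d.\<close>
definition joint_spectral_radius :: "(complex^'d^'d) set \<Rightarrow> real" where
  "joint_spectral_radius S =
     lim (\<lambda>n. Sup {root n (norm (prod_list_mat ms)) | ms. length ms = n \<and> set ms \<subseteq> S})"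

end

theory Submission
  imports Defs "Jordan_Normal_Form.Spectral_Radius"
begin

text \<open>Let \<open>B\<close> be the member of \<open>S\<close> of rank at least two, if any. If a rank-one matrix \<open>R\<close>
  occurs twice in a product, then \<open>X R Y R Z = c X R Z\<close> with \<open>|c| \<le> \<rho>(R Y)\<close>, so a repeated
  rank-one letter can be cut out at the price of a factor bounded by the spectral radius of a
  shorter product in which no rank-one letter repeats. Products in which no rank-one letter
  repeats are powers of \<open>B\<close> separated by at most \<open>|S|\<close> other letters, so by Gelfand's formula
  they grow no faster than \<open>\<mu>\<^sup>n\<close> for any \<open>\<mu> > \<rho>(B)\<close>. Hence \<open>\<rho>(A\<^sub>i\<^sub>1\<cdots>A\<^sub>i\<^sub>n)\<^bsup>1/n\<^esup>\<close> attains a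
  maximum \<open>r\<close> over such products, every product of length \<open>n\<close> has norm \<open>O(L\<^sup>n)\<close> for each
  \<open>L > r\<close>, and the powers of a maximizing product have norm \<open>\<ge> c r\<^sup>n\<close>.\<close>

hide_const (open) Spectral_Radius.spectral_radius Matrix.mat
no_notation Matrix.vec_index (infixl "$" 100)

subsection \<open>The Frobenius norm of complex matrices\<close>

lemma norm_matrix_vector_mult_le: "norm (M *v x) \<le> norm (M::complex^'n^'m) * norm (x::complex^'n)"
proof -
  have row: "cmod ((M *v x) $ i) \<le> norm (M $ i) * norm x" for i
  proof -
    have "cmod ((M *v x) $ i) \<le> (\<Sum>j\<in>UNIV. \<bar>cmod (M $ i $ j)\<bar> * \<bar>cmod (x $ j)\<bar>)"
      unfolding matrix_vector_mult_def by (simp add: norm_mult order_trans[OF norm_sum])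
    also have "\<dots> \<le> norm (M $ i) * norm x"
      unfolding norm_vec_def by (rule L2_set_mult_ineq)
    finally show ?thesis .
  qed
  have "norm (M *v x) \<le> L2_set (\<lambda>i. norm (M $ i) * norm x) UNIV"
    unfolding norm_vec_def[of "M *v x"] by (rule L2_set_mono) (simp_all add: row)
  also have "\<dots> = norm M * norm x"
    by (simp add: L2_set_left_distrib norm_vec_def)
  finally show ?thesis .
qed

lemma norm_transpose: "norm (transpose (M::complex^'n^'m)) = norm M"
proof -
  have "norm (transpose M) ^ 2 = (\<Sum>i\<in>UNIV. \<Sum>j\<in>UNIV. cmod (M $ j $ i) ^ 2)"
    by (simp add: norm_vec_def L2_set_def transpose_def sum_nonneg)
  also have "\<dots> = (\<Sum>j\<in>UNIV. \<Sum>i\<in>UNIV. cmod (M $ j $ i) ^ 2)" by (rule sum.swap)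
  also have "\<dots> = norm M ^ 2"
    by (simp add: norm_vec_def L2_set_def sum_nonneg)
  finally show ?thesis by (simp add: power2_eq_iff_nonneg)
qed

lemma norm_matrix_mult_le: "norm ((A::complex^'n^'m) ** (B::complex^'p^'n)) \<le> norm A * norm B"
proof -
  have "(A ** B) $ i = transpose B *v (A $ i)" for i
    unfolding matrix_matrix_mult_def matrix_vector_mult_def transpose_def Finite_Cartesian_Product.vec_eq_iff
    by (auto intro!: sum.cong simp: mult.commute)
  then have row: "norm ((A ** B) $ i) \<le> norm (A $ i) * norm B" for i
    using norm_matrix_vector_mult_le[of "transpose B" "A $ i"] by (simp add: norm_transpose mult.commute)
  have "norm (A ** B) \<le> L2_set (\<lambda>i. norm (A $ i) * norm B) UNIV"
    unfolding norm_vec_def[of "A ** B"] by (intro L2_set_mono) (simp_all add: row)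
  also have "\<dots> = norm A * norm B"
    by (simp add: L2_set_left_distrib norm_vec_def)
  finally show ?thesis .
qed

lemma norm_le_entry_bound:
  assumes "\<And>i j. cmod (M $ i $ j) \<le> c"
  shows "norm (M::complex^'n^'m) \<le> of_nat (CARD('m) * CARD('n)) * c"
proof -
  have "norm M \<le> (\<Sum>i\<in>UNIV. norm (M $ i))"
    unfolding norm_vec_def[of M] by (rule L2_set_le_sum) simp
  also have "\<dots> \<le> (\<Sum>i\<in>UNIV. \<Sum>j\<in>UNIV. cmod (M $ i $ j))"
    unfolding norm_vec_def by (intro sum_mono L2_set_le_sum) simp
  also have "\<dots> \<le> (\<Sum>i\<in>(UNIV::'m set). \<Sum>j\<in>(UNIV::'n set). c)"
    by (intro sum_mono assms)
  finally show ?thesis by simp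
qed

definition scale_mat :: "complex \<Rightarrow> complex^'n^'m \<Rightarrow> complex^'n^'m" where
  "scale_mat c M = (\<chi> i j. c * M $ i $ j)"

lemma scale_mat_mult_left: "scale_mat c A ** B = scale_mat c (A ** B)"
  by (simp add: scale_mat_def matrix_matrix_mult_def Finite_Cartesian_Product.vec_eq_iff sum_distrib_left mult.assoc)

lemma scale_mat_mult_right: "A ** scale_mat c B = scale_mat c (A ** B)"
  by (simp add: scale_mat_def matrix_matrix_mult_def Finite_Cartesian_Product.vec_eq_iff sum_distrib_left mult.left_commute)

lemma scale_mat_matrix_vector_mult: "scale_mat c A *v v = c *s (A *v v)"
  by (simp add: scale_mat_def matrix_vector_mult_def Finite_Cartesian_Product.vec_eq_iff
      sum_distrib_left mult.assoc)

lemma scale_mat_scale_mat: "scale_mat a (scale_mat b M) = scale_mat (a * b) M"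
  by (simp add: scale_mat_def Finite_Cartesian_Product.vec_eq_iff mult.assoc)

lemma scale_mat_1 [simp]: "scale_mat 1 M = M"
  by (simp add: scale_mat_def Finite_Cartesian_Product.vec_eq_iff)

lemma norm_scale_mat: "norm (scale_mat c M) = cmod c * norm M"
proof -
  have "norm (scale_mat c M $ i) = cmod c * norm (M $ i)" for i
    by (simp add: scale_mat_def norm_vec_def L2_set_right_distrib norm_mult)
  then show ?thesis
    by (simp add: norm_vec_def[of "scale_mat c M"] norm_vec_def[of M] L2_set_right_distrib)
qed

lemma norm_vector_scalar_mult: "norm (c *s (v::complex^'n)) = cmod c * norm v"
  by (simp add: norm_vec_def L2_set_right_distrib norm_mult)

lemma prod_list_mat_Nil [simp]: "prod_list_mat [] = mat 1"
  by (simp add: prod_list_mat_def)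

lemma prod_list_mat_Cons [simp]: "prod_list_mat (A # ms) = A ** prod_list_mat ms"
  by (simp add: prod_list_mat_def)

lemma prod_list_mat_append: "prod_list_mat (xs @ ys) = prod_list_mat xs ** prod_list_mat ys"
  by (induction xs) (simp_all add: matrix_mul_assoc)

lemma prod_list_mat_zero: "(0::complex^'d^'d) \<in> set ms \<Longrightarrow> prod_list_mat ms = 0"
  by (induction ms) auto

lemma norm_prod_list_mat_le:
  assumes "\<And>A. A \<in> set ms \<Longrightarrow> norm A \<le> G" "G \<ge> 0"
  shows "norm (prod_list_mat (ms::(complex^'d^'d) list)) \<le> norm (mat 1 :: complex^'d^'d) * G ^ length ms"
  using assms(1)
proof (induction ms)
  case (Cons A ms)
  have "norm (prod_list_mat (A # ms)) \<le> norm A * norm (prod_list_mat ms)"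
    by (simp add: norm_matrix_mult_le)
  also have "\<dots> \<le> G * (norm (mat 1 :: complex^'d^'d) * G ^ length ms)"
    using Cons assms(2) by (intro mult_mono) auto
  finally show ?case by (simp add: mult_ac)
qed simp

primrec matpow :: "complex^'d^'d \<Rightarrow> nat \<Rightarrow> complex^'d^'d" where
  "matpow B 0 = mat 1"
| "matpow B (Suc m) = B ** matpow B m"

lemma matpow_Suc': "matpow B (Suc m) = matpow B m ** B"
  by (induction m) (simp_all add: matrix_mul_assoc)

lemma prod_list_mat_concat_replicate: "prod_list_mat (concat (replicate j ms)) = matpow (prod_list_mat ms) j"
  by (induction j) (simp_all add: prod_list_mat_append)

lemma matpow_scale_mat: "matpow (scale_mat c A) m = scale_mat (c ^ m) (matpow A m)"
proof (induction m)
  case 0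
  show ?case by (simp add: scale_mat_def Finite_Cartesian_Product.vec_eq_iff Finite_Cartesian_Product.mat_def)
next
  case (Suc m)
  then show ?case
    by (simp add: scale_mat_mult_left scale_mat_mult_right scale_mat_scale_mat mult.commute)
qed

lemma matpow_eigenvector: "P *v v = e *s v \<Longrightarrow> matpow P j *v v = (e ^ j) *s v"
proof (induction j)
  case (Suc j)
  then show ?case
    by (simp add: matrix_vector_mul_assoc[symmetric] vector_scalar_commute)
qed simp

subsection \<open>Spectral radius via Jordan normal forms\<close>

text \<open>A fixed enumeration of the index type transports matrices to the \<open>complex mat\<close>
  representation of Jordan_Normal_Form.\<close>

definition of_index :: "nat \<Rightarrow> 'd::finite" where
  "of_index = (SOME f. bij_betw f {0..<CARD('d)} (UNIV::'d set))"

definition index_of :: "'d::finite \<Rightarrow> nat" where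
  "index_of = inv_into {0..<CARD('d)} of_index"

lemma bij_betw_of_index: "bij_betw (of_index :: nat \<Rightarrow> 'd::finite) {0..<CARD('d)} UNIV"
proof -
  have "\<exists>f. bij_betw f {0..<CARD('d)} (UNIV::'d set)"
    using ex_bij_betw_nat_finite[of "UNIV::'d set"] by simp
  then show ?thesis unfolding of_index_def by (rule someI_ex)
qed

lemma index_of_less: "index_of (x::'d::finite) < CARD('d)"
  using bij_betw_of_index[where 'd='d] unfolding index_of_def
  by (metis atLeastLessThan_iff bij_betw_def inv_into_into UNIV_I)

lemma of_index_index_of [simp]: "of_index (index_of (x::'d::finite)) = x"
  using bij_betw_of_index[where 'd='d] unfolding index_of_def
  by (simp add: bij_betw_def f_inv_into_f)

lemma index_of_of_index [simp]: "i < CARD('d::finite) \<Longrightarrow> index_of (of_index i :: 'd) = i"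
  using bij_betw_of_index[where 'd='d] unfolding index_of_def
  by (simp add: bij_betw_def inv_into_f_f)

lemma sum_UNIV_of_index: "sum g UNIV = (\<Sum>k\<in>{0..<CARD('d::finite)}. g (of_index k :: 'd))"
  by (rule sum.reindex_bij_betw[OF bij_betw_of_index, symmetric])

definition jnf_of_mat :: "complex^'d^'d \<Rightarrow> complex mat" where
  "jnf_of_mat A = Matrix.mat CARD('d) CARD('d) (\<lambda>(i,j). A $ of_index i $ of_index j)"

definition jnf_of_vec :: "complex^'d \<Rightarrow> complex Matrix.vec" where
  "jnf_of_vec x = Matrix.vec CARD('d) (\<lambda>i. x $ of_index i)"

definition vec_of_jnf :: "complex Matrix.vec \<Rightarrow> complex^'d" where
  "vec_of_jnf v = (\<chi> j. vec_index v (index_of j))"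

lemma dim_jnf_of_mat [simp]:
  "dim_row (jnf_of_mat (A::complex^'d^'d)) = CARD('d)" "dim_col (jnf_of_mat A) = CARD('d)"
  by (simp_all add: jnf_of_mat_def)

lemma jnf_of_mat_carrier: "jnf_of_mat (A::complex^'d^'d) \<in> carrier_mat CARD('d) CARD('d)"
  by (simp add: jnf_of_mat_def)

lemma jnf_of_mat_mult: "jnf_of_mat ((A::complex^'d^'d) ** B) = jnf_of_mat A * jnf_of_mat B"
  by (rule eq_matI)
    (auto simp: jnf_of_mat_def matrix_matrix_mult_def scalar_prod_def row_def col_def
      intro!: sum_UNIV_of_index)

lemma jnf_of_mat_one: "jnf_of_mat (mat 1 :: complex^'d^'d) = 1\<^sub>m CARD('d)"
proof (rule eq_matI)
  fix i j assume "i < dim_row (1\<^sub>m CARD('d))" "j < dim_col (1\<^sub>m CARD('d))"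
  then have ij: "i < CARD('d)" "j < CARD('d)" by auto
  then have "(of_index i :: 'd) = of_index j \<longleftrightarrow> i = j" by (metis index_of_of_index)
  then show "jnf_of_mat (mat 1 :: complex^'d^'d) $$ (i, j) = 1\<^sub>m CARD('d) $$ (i, j)"
    using ij by (simp add: jnf_of_mat_def Finite_Cartesian_Product.mat_def)
qed (auto simp: jnf_of_mat_def)

lemma jnf_of_mat_matpow: "jnf_of_mat (matpow (B::complex^'d^'d) m) = jnf_of_mat B ^\<^sub>m m"
  by (induction m) (simp_all add: jnf_of_mat_one matpow_Suc' jnf_of_mat_mult del: matpow.simps(2))

lemma jnf_of_vec_mult: "jnf_of_vec ((A::complex^'d^'d) *v x) = jnf_of_mat A *\<^sub>v jnf_of_vec x"
  by (rule eq_vecI)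
    (auto simp: jnf_of_mat_def jnf_of_vec_def matrix_vector_mult_def scalar_prod_def row_def
      intro!: sum_UNIV_of_index)

lemma jnf_of_vec_inject: "jnf_of_vec (x::complex^'d) = jnf_of_vec y \<longleftrightarrow> x = y"
proof
  assume h: "jnf_of_vec x = jnf_of_vec y"
  have "x $ j = y $ j" for j
    using arg_cong[OF h, of "\<lambda>v. vec_index v (index_of j)"] index_of_less[of j]
    by (simp add: jnf_of_vec_def)
  then show "x = y" by (simp add: Finite_Cartesian_Product.vec_eq_iff)
qed simp

lemma jnf_of_vec_of_jnf: "v \<in> carrier_vec CARD('d) \<Longrightarrow> jnf_of_vec (vec_of_jnf v :: complex^'d) = v"
  by (rule eq_vecI) (auto simp: jnf_of_vec_def vec_of_jnf_def)

lemma jnf_of_vec_zero: "jnf_of_vec (0::complex^'d) = 0\<^sub>v CARD('d)"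
  by (rule eq_vecI) (auto simp: jnf_of_vec_def)

lemma jnf_of_vec_scale: "jnf_of_vec (c *s (x::complex^'d)) = c \<cdot>\<^sub>v jnf_of_vec x"
  by (rule eq_vecI) (auto simp: jnf_of_vec_def)

lemma eigenvalues_eq_spectrum: "eigenvalues (A::complex^'d^'d) = spectrum (jnf_of_mat A)"
proof (intro Set.set_eqI iffI)
  fix c assume "c \<in> eigenvalues A"
  then obtain v where v: "v \<noteq> 0" "A *v v = c *s v" by (auto simp: eigenvalues_def)
  then have "jnf_of_vec v \<noteq> 0\<^sub>v CARD('d)" "jnf_of_mat A *\<^sub>v jnf_of_vec v = c \<cdot>\<^sub>v jnf_of_vec v"
    by (metis jnf_of_vec_inject jnf_of_vec_zero, metis jnf_of_vec_mult jnf_of_vec_scale)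
  then have "eigenvector (jnf_of_mat A) (jnf_of_vec v) c"
    by (simp add: eigenvector_def jnf_of_vec_def)
  then show "c \<in> spectrum (jnf_of_mat A)" by (auto simp: spectrum_def eigenvalue_def)
next
  fix c assume "c \<in> spectrum (jnf_of_mat A)"
  then obtain w where w: "w \<in> carrier_vec CARD('d)" "w \<noteq> 0\<^sub>v CARD('d)"
      "jnf_of_mat A *\<^sub>v w = c \<cdot>\<^sub>v w"
    unfolding spectrum_def eigenvalue_def eigenvector_def by (auto simp: jnf_of_mat_def)
  define v :: "complex^'d" where "v = vec_of_jnf w"
  have v: "jnf_of_vec v = w" using w(1) by (simp add: v_def jnf_of_vec_of_jnf)
  then have "v \<noteq> 0" "A *v v = c *s v"
    using w(2,3) by (auto simp flip: jnf_of_vec_inject simp: jnf_of_vec_zero jnf_of_vec_mult jnf_of_vec_scale)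
  then show "c \<in> eigenvalues A" by (auto simp: eigenvalues_def)
qed

lemma spectral_radius_eq_jnf:
  "spectral_radius (A::complex^'d^'d) = Spectral_Radius.spectral_radius (jnf_of_mat A)"
  by (simp add: Defs.spectral_radius_def Spectral_Radius.spectral_radius_def eigenvalues_eq_spectrum)

lemma finite_eigenvalues: "finite (eigenvalues (A::complex^'d^'d))"
  using card_finite_spectrum(1)[OF jnf_of_mat_carrier] by (simp add: eigenvalues_eq_spectrum)

lemma eigenvalues_nonempty: "eigenvalues (A::complex^'d^'d) \<noteq> {}"
  using spectrum_non_empty[OF jnf_of_mat_carrier] by (simp add: eigenvalues_eq_spectrum)

lemma eigenvalue_le_spectral_radius:
  "c \<in> eigenvalues (A::complex^'d^'d) \<Longrightarrow> cmod c \<le> spectral_radius A"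
  unfolding Defs.spectral_radius_def using finite_eigenvalues by (intro Max_ge) auto

lemma spectral_radius_attained:
  obtains c where "c \<in> eigenvalues (A::complex^'d^'d)" "cmod c = spectral_radius A"
proof -
  have "Max (cmod ` eigenvalues A) \<in> cmod ` eigenvalues A"
    using finite_eigenvalues eigenvalues_nonempty by (intro Max_in) auto
  then show ?thesis using that unfolding Defs.spectral_radius_def by auto
qed

lemma spectral_radius_nonneg: "0 \<le> spectral_radius (A::complex^'d^'d)"
  by (metis spectral_radius_attained norm_ge_zero)

lemma eigenvalue_le_norm:
  assumes "M *v v = e *s v" "v \<noteq> 0"
  shows "cmod e \<le> norm (M::complex^'d^'d)"
proof -
  have "cmod e * norm v = norm (M *v v)" using assms by (simp add: norm_vector_scalar_mult)
  also have "\<dots> \<le> norm M * norm v" by (rule norm_matrix_vector_mult_le)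
  finally show ?thesis using assms(2) by simp
qed

lemma spectral_radius_le_norm: "spectral_radius (M::complex^'d^'d) \<le> norm M"
proof -
  obtain c where c: "c \<in> eigenvalues M" "cmod c = spectral_radius M"
    by (rule spectral_radius_attained)
  then obtain v where "v \<noteq> 0" "M *v v = c *s v" by (auto simp: eigenvalues_def)
  with c(2) show ?thesis using eigenvalue_le_norm by metis
qed

text \<open>After scaling
  by \<open>1/\<mu>\<close> this is the bounded-powers theorem of Jordan_Normal_Form.\<close>

lemma matpow_norm_le_geometric:
  assumes "spectral_radius (B::complex^'d^'d) < \<mu>"
  obtains C where "\<And>m. norm (matpow B m) \<le> C * \<mu> ^ m"
proof -
  have \<mu>: "\<mu> > 0" using assms spectral_radius_nonneg[of B] by linarith
  define B' where "B' = scale_mat (complex_of_real (1 / \<mu>)) B"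
  have scaled: "B = scale_mat (complex_of_real \<mu>) B'"
    using \<mu> by (simp add: B'_def scale_mat_scale_mat flip: of_real_mult)
  have "cmod e < 1" if "e \<in> eigenvalues B'" for e
  proof -
    from that obtain v where "v \<noteq> 0" "B' *v v = e *s v" unfolding eigenvalues_def by blast
    then have "complex_of_real \<mu> * e \<in> eigenvalues B"
      unfolding eigenvalues_def by (subst scaled) (auto simp: scale_mat_matrix_vector_mult)
    then have "\<mu> * cmod e \<le> spectral_radius B"
      using eigenvalue_le_spectral_radius \<mu> by (fastforce simp: norm_mult)
    with assms have "\<mu> * cmod e < \<mu> * 1" by simp
    with \<mu> show ?thesis by (simp only: mult_less_cancel_left_pos)
  qed
  then have "Spectral_Radius.spectral_radius (jnf_of_mat B') < 1"
    using finite_eigenvalues[of B'] eigenvalues_nonempty[of B']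
    by (simp add: spectral_radius_eq_jnf[symmetric] Defs.spectral_radius_def)
  from spectral_radius_jnf_norm_bound_less_1_upper_triangular[OF jnf_of_mat_carrier this]
  obtain c where c: "\<And>k. norm_bound (jnf_of_mat B' ^\<^sub>m k) c" by auto
  have "cmod (matpow B' k $ i $ j) \<le> c" for k i j
  proof -
    have "cmod (jnf_of_mat (matpow B' k) $$ (index_of i, index_of j)) \<le> c"
      using c[of k] index_of_less[of i] index_of_less[of j]
      unfolding norm_bound_def jnf_of_mat_matpow[symmetric] by simp
    then show ?thesis using index_of_less[of i] index_of_less[of j] by (simp add: jnf_of_mat_def)
  qed
  then have "norm (matpow B' m) \<le> of_nat (CARD('d) * CARD('d)) * c" for m
    by (rule norm_le_entry_bound)
  moreover have "norm (matpow B m) = \<mu> ^ m * norm (matpow B' m)" for m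
    using \<mu> by (simp add: scaled matpow_scale_mat norm_scale_mat norm_power)
  ultimately have "norm (matpow B m) \<le> of_nat (CARD('d) * CARD('d)) * c * \<mu> ^ m" for m
    using \<mu> by (simp add: mult.commute mult_left_mono)
  then show ?thesis by (rule that)
qed

subsection \<open>Rank-one matrices\<close>

lemma rows_eq_range: "Finite_Cartesian_Product.rows (A::'a::field^'n^'m) = range (\<lambda>i. A $ i)"
  by (auto simp: Finite_Cartesian_Product.rows_def Finite_Cartesian_Product.row_def)

lemma rank_eq_0_imp_zero: "rank (A::complex^'n^'m) = 0 \<Longrightarrow> A = 0"
  unfolding row_rank_def_gen rows_eq_range vec.dim_eq_0
  by (simp add: image_subset_iff Finite_Cartesian_Product.vec_eq_iff)

lemma rank_one_outer_product:
  assumes "rank (A::complex^'n^'m) = 1"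
  obtains a b where "\<And>i. A $ i = (a $ i) *s b"
proof -
  obtain Bs where Bs: "range (\<lambda>i. A $ i) \<subseteq> vec.span Bs" "card Bs = vec.dim (range (\<lambda>i. A $ i))"
    using vec.basis_exists by blast
  then have "card Bs = 1" using assms unfolding row_rank_def_gen rows_eq_range by simp
  then obtain b where "Bs = {b}" by (rule card_1_singletonE)
  then have "\<forall>i. \<exists>t. A $ i = t *s b" using Bs(1) by (auto simp: vec.span_singleton)
  then obtain t where "\<And>i. A $ i = t i *s b" by metis
  then show ?thesis by (intro that[of "\<chi> i. t i" b]) simp
qed

text \<open>If \<open>R = a b\<^sup>T\<close>, then \<open>R Y R = (b\<^sup>T Y a) R\<close>, and \<open>b\<^sup>T Y a\<close> is an eigenvalue of \<open>R Y\<close> with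
  eigenvector \<open>a\<close>.\<close>

lemma rank_one_sandwich:
  assumes "rank (R::complex^'d^'d) = 1"
  obtains c where "R ** Y ** R = scale_mat c R" "cmod c \<le> spectral_radius (R ** Y)"
proof -
  obtain a b where "\<And>i. R $ i = (a $ i) *s b"
    using rank_one_outer_product[OF assms] by blast
  then have R: "R $ i $ j = a $ i * b $ j" for i j by simp
  define c where "c = (\<Sum>k\<in>UNIV. (\<Sum>l\<in>UNIV. b $ l * Y $ l $ k) * a $ k)"
  have RY: "(R ** Y) $ i $ k = a $ i * (\<Sum>l\<in>UNIV. b $ l * Y $ l $ k)" for i k
    by (simp add: matrix_matrix_mult_def R sum_distrib_left mult_ac)
  have "R ** Y ** R = scale_mat c R"
    by (simp add: Finite_Cartesian_Product.vec_eq_iff scale_mat_def matrix_matrix_mult_def[of "R ** Y" R]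
        RY R c_def sum_distrib_left sum_distrib_right mult_ac)
  moreover have "cmod c \<le> spectral_radius (R ** Y)"
  proof (cases "a = 0")
    case True
    then show ?thesis by (simp add: c_def spectral_radius_nonneg)
  next
    case False
    have "(R ** Y) *v a = c *s a"
      by (simp add: Finite_Cartesian_Product.vec_eq_iff matrix_vector_mult_def RY c_def
          sum_distrib_left sum_distrib_right mult_ac)
    with False have "c \<in> eigenvalues (R ** Y)" by (auto simp: eigenvalues_def)
    then show ?thesis by (rule eigenvalue_le_spectral_radius)
  qed
  ultimately show ?thesis by (rule that)
qed

lemma prod_list_mat_cut_rank_one_cycle:
  assumes "rank R = 1"
  obtains c where "prod_list_mat (x @ R # y @ R # z) = scale_mat c (prod_list_mat (x @ R # z))"
    and "cmod c \<le> spectral_radius (prod_list_mat (R # y))"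
proof -
  obtain c where c: "R ** prod_list_mat y ** R = scale_mat c R"
    and "cmod c \<le> spectral_radius (R ** prod_list_mat y)"
    by (rule rank_one_sandwich[OF assms])
  moreover have "prod_list_mat (x @ R # y @ R # z)
      = prod_list_mat x ** ((R ** prod_list_mat y ** R) ** prod_list_mat z)"
    by (simp add: prod_list_mat_append matrix_mul_assoc)
  ultimately show ?thesis
    by (intro that) (simp_all add: scale_mat_mult_left scale_mat_mult_right prod_list_mat_append)
qed

subsection \<open>Repeated letters\<close>

lemma count_list_ge_2_split:
  assumes "2 \<le> count_list xs a"
  obtains p q r where "xs = p @ a # q @ a # r"
proof -
  obtain n where "count_list xs a = Suc (Suc n)"
    using assms by (metis add_2_eq_Suc le_Suc_ex)
  then obtain p rest where xs: "xs = p @ a # rest" and "count_list rest a = Suc n"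
    using count_list_Suc_split_first by metis
  then have "a \<in> set rest" by (metis count_notin nat.distinct(1))
  then obtain q r where "rest = q @ a # r" by (meson split_list)
  with xs show ?thesis by (intro that) simp
qed

text \<open>Choosing the two occurrences of a repeated \<open>P\<close>-letter \<open>R\<close> as close together as possible
  makes \<open>R # y\<close> free of repeated \<open>P\<close>-letters.\<close>

lemma shortest_repeat_split:
  assumes "\<not> (\<forall>A\<in>set w. P A \<longrightarrow> count_list w A \<le> 1)"
  obtains x y z R where "w = x @ R # y @ R # z" "P R"
    "\<forall>A\<in>set (R # y). P A \<longrightarrow> count_list (R # y) A \<le> 1"
proof -
  define gap where "gap = (\<lambda>k. \<exists>x y z R. w = x @ R # y @ R # z \<and> P R \<and> length y = k)"
  obtain A where A: "P A" "2 \<le> count_list w A" using assms by (auto simp: not_le)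
  obtain p q r where "w = p @ A # q @ A # r" using A(2) by (rule count_list_ge_2_split)
  with A(1) have "gap (length q)" unfolding gap_def by blast
  then have "gap (LEAST k. gap k)" by (rule LeastI)
  then obtain x y z R where w: "w = x @ R # y @ R # z" "P R" and y: "length y = (LEAST k. gap k)"
    unfolding gap_def by blast
  have shortest: "length y \<le> length y'" if "w = x' @ R' # y' @ R' # z'" "P R'" for x' y' z' R'
    unfolding y using that by (intro Least_le) (auto simp: gap_def)
  have "\<forall>A\<in>set (R # y). P A \<longrightarrow> count_list (R # y) A \<le> 1"
  proof (rule ccontr)
    assume "\<not> ?thesis"
    then obtain A where A: "P A" "2 \<le> count_list (R # y) A" by (auto simp: not_le)
    show False
    proof (cases "A = R")
      case True
      with A have "R \<in> set y" by (cases "R \<in> set y") auto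
      then obtain y1 y2 where "y = y1 @ R # y2" by (meson split_list)
      with w shortest[where x'=x and y'=y1 and z'="y2 @ R # z" and R'=R] show False by simp
    next
      case False
      with A have "2 \<le> count_list y A" by simp
      then obtain y1 y2 y3 where "y = y1 @ A # y2 @ A # y3" by (rule count_list_ge_2_split)
      with w A(1) shortest[where x'="x @ R # y1" and y'=y2 and z'="y3 @ R # z" and R'=A] show False by simp
    qed
  qed
  with w show ?thesis by (rule that)
qed

lemma count_list_filter: "count_list (filter P xs) a = (if P a then count_list xs a else 0)"
  by (induction xs) auto

lemma length_filter_le_card:
  assumes "set xs \<subseteq> X" "finite X" "\<And>a. a \<in> set xs \<Longrightarrow> P a \<Longrightarrow> count_list xs a \<le> 1"
  shows "length (filter P xs) \<le> card X"
proof -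
  have "set (filter P xs) \<subseteq> X" using assms(1) by auto
  then have "length (filter P xs) = (\<Sum>a\<in>X. count_list (filter P xs) a)"
    using assms(2) by (simp add: sum_count_set)
  also have "\<dots> \<le> (\<Sum>a\<in>X. 1)"
  proof (rule sum_mono)
    fix a
    show "count_list (filter P xs) a \<le> 1"
      using assms(3)[of a] by (cases "a \<in> set xs") (simp_all add: count_list_filter)
  qed
  finally show ?thesis by simp
qed

lemma norm_matpow_mult_prod_list_mat_le:
  fixes B :: "complex^'d^'d"
  assumes C: "\<And>m. norm (matpow B m) \<le> C * \<mu> ^ m" and \<mu>: "\<mu> > 0"
    and M: "\<And>A. A \<in> set w \<Longrightarrow> A \<noteq> B \<Longrightarrow> norm A \<le> M" and "M \<ge> 0"
  shows "norm (matpow B m ** prod_list_mat w)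
    \<le> C * (C * M / \<mu>) ^ length (filter (\<lambda>A. A \<noteq> B) w) * \<mu> ^ (m + length w)"
  using M
proof (induction w arbitrary: m)
  case Nil
  then show ?case using C[of m] by simp
next
  case (Cons A w)
  have "C \<ge> 0" using order_trans[OF norm_ge_zero C[of 0]] by simp
  show ?case
  proof (cases "A = B")
    case True
    then have "matpow B m ** prod_list_mat (A # w) = matpow B (Suc m) ** prod_list_mat w"
      by (simp add: matpow_Suc' matrix_mul_assoc del: matpow.simps(2))
    then show ?thesis using Cons.IH[of "Suc m"] Cons.prems True by simp
  next
    case False
    define t where "t = length (filter (\<lambda>A. A \<noteq> B) w)"
    have IH: "norm (prod_list_mat w) \<le> C * (C * M / \<mu>) ^ t * \<mu> ^ length w"
      using Cons.IH[of 0] Cons.prems unfolding t_def by simp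
    have "norm (matpow B m ** prod_list_mat (A # w))
        \<le> norm (matpow B m) * (norm A * norm (prod_list_mat w))"
      by (simp add: order_trans[OF norm_matrix_mult_le] mult_left_mono norm_matrix_mult_le)
    also have "\<dots> \<le> (C * \<mu> ^ m) * (M * (C * (C * M / \<mu>) ^ t * \<mu> ^ length w))"
      using C[of m] Cons.prems False IH \<open>C \<ge> 0\<close> \<open>M \<ge> 0\<close> \<mu>
      by (intro mult_mono) (auto intro: order_trans[OF norm_ge_zero])
    also have "\<dots> = C * (C * M / \<mu>) ^ Suc t * \<mu> ^ (m + length (A # w))"
      using \<mu> by (simp add: power_add field_simps)
    finally show ?thesis using False by (simp add: t_def)
  qed
qed

lemma power_ge_min_mult:
  fixes r :: real
  assumes "r > 0" "n \<le> m" "m \<le> n + k"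
  shows "r ^ n * min 1 (r ^ k) \<le> r ^ m"
proof (cases "r \<le> 1")
  case True
  have "r ^ n * min 1 (r ^ k) \<le> r ^ (n + k)"
    using assms(1) by (simp add: power_add mult_left_mono)
  also have "\<dots> \<le> r ^ m" using True assms by (intro power_decreasing) auto
  finally show ?thesis .
next
  case False
  have "r ^ n * min 1 (r ^ k) \<le> r ^ n" using assms(1) by (simp add: mult_left_le)
  also have "\<dots> \<le> r ^ m" using False assms by (intro power_increasing) auto
  finally show ?thesis .
qed

subsection \<open>Lower bound from powers of a single product\<close>

definition normalized_spectral_radius :: "(complex^'d^'d) list \<Rightarrow> real" where
  "normalized_spectral_radius ms = root (length ms) (spectral_radius (prod_list_mat ms))"

lemma normalized_spectral_radius_nonneg: "0 \<le> normalized_spectral_radius ms"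
  unfolding normalized_spectral_radius_def by (rule real_root_ge_zero[OF spectral_radius_nonneg])

lemma normalized_spectral_radius_singleton [simp]:
  "normalized_spectral_radius [A] = spectral_radius A"
  by (simp add: normalized_spectral_radius_def)

lemma normalized_spectral_radius_power:
  "ms \<noteq> [] \<Longrightarrow> normalized_spectral_radius ms ^ length ms = spectral_radius (prod_list_mat ms)"
  unfolding normalized_spectral_radius_def by (simp add: spectral_radius_nonneg)

lemma eigenvalue_power_le_norm_prefix:
  assumes "e \<in> eigenvalues (prod_list_mat (w::(complex^'d^'d) list))"
  shows "cmod e ^ Suc j
    \<le> norm (prod_list_mat (concat (replicate j w) @ take s w)) * norm (prod_list_mat (drop s w))"
proof -
  let ?P = "prod_list_mat w"
  obtain v where v: "v \<noteq> 0" "?P *v v = e *s v" using assms by (auto simp: eigenvalues_def)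
  have "matpow ?P (Suc j) = matpow ?P j ** (prod_list_mat (take s w) ** prod_list_mat (drop s w))"
    by (simp add: matpow_Suc' del: matpow.simps(2) flip: prod_list_mat_append)
  also have "\<dots> = prod_list_mat (concat (replicate j w) @ take s w) ** prod_list_mat (drop s w)"
    by (simp add: prod_list_mat_append prod_list_mat_concat_replicate matrix_mul_assoc)
  finally have split: "matpow ?P (Suc j) = \<dots>" .
  have "cmod e ^ Suc j \<le> norm (matpow ?P (Suc j))"
    using eigenvalue_le_norm[OF matpow_eigenvector[OF v(2)] v(1), of "Suc j"] by (simp only: norm_power)
  also have "\<dots> \<le> norm (prod_list_mat (concat (replicate j w) @ take s w)) * norm (prod_list_mat (drop s w))"
    unfolding split by (rule norm_matrix_mult_le)
  finally show ?thesis .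
qed

text \<open>The word of length \<open>n\<close> is \<open>w\<^sup>j\<close> followed by a prefix of \<open>w\<close>; completing it to \<open>w\<^sup>j\<^sup>+\<^sup>1\<close>
  costs a bounded factor.\<close>

lemma prod_norm_ge_powers:
  fixes w :: "(complex^'d^'d) list"
  assumes "finite S" "w \<noteq> []" "set w \<subseteq> S" and r: "normalized_spectral_radius w > 0"
  obtains c where "c > 0"
    "\<And>n. \<exists>u. length u = n \<and> set u \<subseteq> S
       \<and> c * normalized_spectral_radius w ^ n \<le> norm (prod_list_mat u)"
proof -
  define r where "r = normalized_spectral_radius w"
  define k where "k = length w"
  have "k > 0" using assms(2) by (simp add: k_def)
  obtain e where e: "e \<in> eigenvalues (prod_list_mat w)" "cmod e = r ^ k"
    using spectral_radius_attained normalized_spectral_radius_power[OF assms(2)]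
    unfolding r_def k_def by metis
  define G where "G = 1 + (\<Sum>A\<in>S. norm A)"
  have G: "G \<ge> 1" "\<And>A. A \<in> S \<Longrightarrow> norm A \<le> G"
    using member_le_sum[OF _ _ assms(1), of _ norm] by (auto simp: G_def sum_nonneg intro: add_increasing)
  define N where "N = norm (mat 1 :: complex^'d^'d)"
  have "(mat 1 :: complex^'d^'d) \<noteq> 0"
    by (auto simp: Finite_Cartesian_Product.vec_eq_iff Finite_Cartesian_Product.mat_def)
  then have "N > 0" by (simp add: N_def)
  define c where "c = min 1 (r ^ k) / (N * G ^ k)"
  have "r > 0" using r by (simp add: r_def)
  have "\<exists>u. length u = n \<and> set u \<subseteq> S \<and> c * r ^ n \<le> norm (prod_list_mat u)" for n
  proof -
    define j where "j = n div k"
    define s where "s = n mod k"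
    define u where "u = concat (replicate j w) @ take s w"
    have n: "n = j * k + s" "s < k" using \<open>k > 0\<close> by (simp_all add: j_def s_def)
    have "length u = n" using n by (simp add: u_def k_def length_concat sum_list_replicate)
    moreover have "set u \<subseteq> S" using assms(3) set_take_subset[of s w] by (auto simp: u_def)
    moreover have "c * r ^ n \<le> norm (prod_list_mat u)"
    proof -
      have "norm (prod_list_mat (drop s w)) \<le> N * G ^ length (drop s w)"
        unfolding N_def using G assms(3) set_drop_subset[of s w]
        by (intro norm_prod_list_mat_le) auto
      also have "\<dots> \<le> N * G ^ k"
        using \<open>N > 0\<close> G by (intro mult_left_mono power_increasing) (auto simp: k_def)
      finally have "norm (prod_list_mat u) * norm (prod_list_mat (drop s w))
          \<le> norm (prod_list_mat u) * (N * G ^ k)"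
        by (simp add: mult_left_mono)
      moreover have "cmod e ^ Suc j \<le> norm (prod_list_mat u) * norm (prod_list_mat (drop s w))"
        unfolding u_def by (rule eigenvalue_power_le_norm_prefix[OF e(1)])
      ultimately have "cmod (e ^ Suc j) \<le> norm (prod_list_mat u) * (N * G ^ k)"
        unfolding norm_power by linarith
      moreover have "r ^ n * min 1 (r ^ k) \<le> cmod (e ^ Suc j)"
        unfolding norm_power e(2) power_mult[symmetric]
        using \<open>r > 0\<close> n by (intro power_ge_min_mult) (auto simp: algebra_simps)
      moreover have "c * r ^ n * (N * G ^ k) = r ^ n * min 1 (r ^ k)"
        using \<open>N > 0\<close> G by (simp add: c_def)
      ultimately have "c * r ^ n * (N * G ^ k) \<le> norm (prod_list_mat u) * (N * G ^ k)"
        by linarith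
      then show ?thesis using \<open>N > 0\<close> G by (simp add: mult_le_cancel_right)
    qed
    ultimately show ?thesis by blast
  qed
  moreover have "c > 0" using \<open>r > 0\<close> \<open>N > 0\<close> G by (simp add: c_def)
  ultimately show ?thesis using that unfolding r_def by blast
qed

definition norm_growth :: "(complex^'d^'d) set \<Rightarrow> nat \<Rightarrow> real" where
  "norm_growth S n = Sup {root n (norm (prod_list_mat ms)) | ms. length ms = n \<and> set ms \<subseteq> S}"

lemma joint_spectral_radius_eq_lim: "joint_spectral_radius S = lim (norm_growth S)"
  by (simp add: joint_spectral_radius_def norm_growth_def[abs_def])

lemma norm_growth_le:
  assumes "S \<noteq> {}"
    and "\<And>ms. length ms = n \<Longrightarrow> set ms \<subseteq> S \<Longrightarrow> root n (norm (prod_list_mat ms)) \<le> b"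
  shows "norm_growth S n \<le> b"
  unfolding norm_growth_def
proof (rule cSup_least)
  obtain A where "A \<in> S" using assms(1) by blast
  then show "{root n (norm (prod_list_mat ms)) | ms. length ms = n \<and> set ms \<subseteq> S} \<noteq> {}"
    by (auto intro!: exI[of _ "replicate n A"])
qed (use assms(2) in blast)

lemma root_norm_le_norm_growth:
  assumes "finite S" "length ms = n" "set ms \<subseteq> S"
  shows "root n (norm (prod_list_mat ms)) \<le> norm_growth S n"
  unfolding norm_growth_def
proof (rule le_cSup_finite)
  have "{root n (norm (prod_list_mat ms)) | ms. length ms = n \<and> set ms \<subseteq> S}
      = (\<lambda>ms. root n (norm (prod_list_mat ms))) ` {ms. set ms \<subseteq> S \<and> length ms = n}"
    by auto
  then show "finite {root n (norm (prod_list_mat ms)) | ms. length ms = n \<and> set ms \<subseteq> S}"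
    using finite_lists_length_eq[OF assms(1)] by simp
qed (use assms in blast)

lemma norm_growth_nonneg:
  assumes "finite S" "S \<noteq> {}"
  shows "0 \<le> norm_growth S n"
proof -
  obtain A where "A \<in> S" using assms(2) by blast
  have "0 \<le> root n (norm (prod_list_mat (replicate n A)))"
    by (intro real_root_ge_zero norm_ge_zero)
  also have "\<dots> \<le> norm_growth S n"
    using assms(1) \<open>A \<in> S\<close> by (intro root_norm_le_norm_growth) auto
  finally show ?thesis .
qed

lemma eventually_norm_growth_less:
  assumes "S \<noteq> {}" "K \<ge> 0" "L > 0" "L < a"
    and K: "\<And>ms. set ms \<subseteq> S \<Longrightarrow> norm (prod_list_mat ms) \<le> K * L ^ length ms"
  shows "eventually (\<lambda>n. norm_growth S n < a) sequentially"
proof -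
  have "(\<lambda>n. root n (K + 1)) \<longlonglongrightarrow> 1" using assms(2) by (intro LIMSEQ_root_const) simp
  then have "eventually (\<lambda>n. root n (K + 1) < a / L) sequentially"
    using assms(3,4) by (intro order_tendstoD(2)) (auto simp: field_simps)
  then show ?thesis
    using eventually_ge_at_top[of "1::nat"]
  proof eventually_elim
    case (elim n)
    have "norm_growth S n \<le> root n (K + 1) * L"
    proof (rule norm_growth_le[OF assms(1)])
      fix ms assume ms: "length ms = n" "set ms \<subseteq> S"
      have "norm (prod_list_mat ms) \<le> (K + 1) * L ^ n"
        using order_trans[OF K[OF ms(2), unfolded ms(1)] mult_right_mono[of K "K + 1" "L ^ n"]]
          assms(3) by simp
      then have "root n (norm (prod_list_mat ms)) \<le> root n ((K + 1) * L ^ n)"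
        using elim(2) by (intro real_root_le_mono) auto
      also have "\<dots> = root n (K + 1) * L"
        using elim(2) assms(3) by (simp add: real_root_mult real_root_power_cancel)
      finally show "root n (norm (prod_list_mat ms)) \<le> root n (K + 1) * L" .
    qed
    also have "\<dots> < a" using elim(1) assms(3) by (simp add: pos_less_divide_eq)
    finally show ?case .
  qed
qed

lemma eventually_norm_growth_greater:
  assumes "finite S" "c > 0" "r > 0" "a < r"
    and c: "\<And>n. \<exists>ms. length ms = n \<and> set ms \<subseteq> S \<and> c * r ^ n \<le> norm (prod_list_mat ms)"
  shows "eventually (\<lambda>n. a < norm_growth S n) sequentially"
proof -
  have "(\<lambda>n. root n c) \<longlonglongrightarrow> 1" using assms(2) by (rule LIMSEQ_root_const)
  then have "eventually (\<lambda>n. a / r < root n c) sequentially"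
    using assms(3,4) by (intro order_tendstoD(1)) (auto simp: field_simps)
  then show ?thesis
    using eventually_ge_at_top[of "1::nat"]
  proof eventually_elim
    case (elim n)
    obtain ms where ms: "length ms = n" "set ms \<subseteq> S" "c * r ^ n \<le> norm (prod_list_mat ms)"
      using c by blast
    have "a < root n c * r" using elim(1) assms(3) by (simp add: divide_less_eq)
    also have "\<dots> = root n (c * r ^ n)"
      using elim(2) assms(3) by (simp add: real_root_mult real_root_power_cancel)
    also have "\<dots> \<le> root n (norm (prod_list_mat ms))"
      using elim(2) ms(3) by (intro real_root_le_mono) auto
    also have "\<dots> \<le> norm_growth S n"
      using assms(1) ms(1,2) by (rule root_norm_le_norm_growth)
    finally show ?case .
  qed
qed

lemma joint_spectral_radius_eqI:
  fixes S :: "(complex^'d^'d) set"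
  assumes "finite S" "S \<noteq> {}" "r \<ge> 0"
    and upper: "\<And>L. r < L \<Longrightarrow> \<exists>K\<ge>0. \<forall>ms. set ms \<subseteq> S \<longrightarrow> norm (prod_list_mat ms) \<le> K * L ^ length ms"
    and lower: "r > 0 \<Longrightarrow> \<exists>c>0. \<forall>n. \<exists>ms. length ms = n \<and> set ms \<subseteq> S \<and> c * r ^ n \<le> norm (prod_list_mat ms)"
  shows "joint_spectral_radius S = r"
proof -
  have "norm_growth S \<longlonglongrightarrow> r"
  proof (rule order_tendstoI)
    fix a assume "r < a"
    then have L: "r < (r + a) / 2" "(r + a) / 2 > 0" "(r + a) / 2 < a" using assms(3) by auto
    with upper obtain K where "K \<ge> 0"
      and K: "\<And>ms. set ms \<subseteq> S \<Longrightarrow> norm (prod_list_mat ms) \<le> K * ((r + a) / 2) ^ length ms"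
      by blast
    show "eventually (\<lambda>n. norm_growth S n < a) sequentially"
      using assms(2) \<open>K \<ge> 0\<close> L(2,3) K by (rule eventually_norm_growth_less)
  next
    fix a assume "a < r"
    show "eventually (\<lambda>n. a < norm_growth S n) sequentially"
    proof (cases "a < 0")
      case True
      with norm_growth_nonneg[OF assms(1,2)] show ?thesis
        by (intro always_eventually allI) (meson order_less_le_trans)
    next
      case False
      with \<open>a < r\<close> have "r > 0" by linarith
      with lower obtain c where "c > 0"
        and c: "\<And>n. \<exists>ms. length ms = n \<and> set ms \<subseteq> S \<and> c * r ^ n \<le> norm (prod_list_mat ms)"
        by blast
      show ?thesis
        using assms(1) \<open>c > 0\<close> \<open>r > 0\<close> \<open>a < r\<close> c by (rule eventually_norm_growth_greater)
    qed
  qed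
  then show ?thesis by (simp add: joint_spectral_radius_eq_lim limI)
qed

subsection \<open>Sets with at most one member of rank two or more\<close>

definition rank_one_letters_distinct :: "(complex^'d^'d) list \<Rightarrow> bool" where
  "rank_one_letters_distinct ms \<longleftrightarrow> (\<forall>A\<in>set ms. rank A = 1 \<longrightarrow> count_list ms A \<le> 1)"

definition admissible_words :: "(complex^'d^'d) set \<Rightarrow> (complex^'d^'d) list set" where
  "admissible_words S = {ms. ms \<noteq> [] \<and> set ms \<subseteq> S \<and> rank_one_letters_distinct ms}"

locale all_but_one_rank_le_one =
  fixes S :: "(complex^'d^'d) set" and B :: "complex^'d^'d"
  assumes finite_S: "finite S" and B_in_S: "B \<in> S"
    and rank_le_one: "\<And>A. A \<in> S \<Longrightarrow> A \<noteq> B \<Longrightarrow> rank A \<le> 1"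
begin

lemma rank_one_if_nonzero: "A \<in> S \<Longrightarrow> A \<noteq> B \<Longrightarrow> A \<noteq> 0 \<Longrightarrow> rank A = 1"
  using rank_le_one[of A] by (cases "rank A = 0") (auto dest: rank_eq_0_imp_zero)

lemma B_admissible: "[B] \<in> admissible_words S"
  using B_in_S by (simp add: admissible_words_def rank_one_letters_distinct_def)

text \<open>Unless it contains \<open>0\<close>, such a word has at most \<open>|S|\<close> letters other than \<open>B\<close>.\<close>

lemma rank_one_letters_distinct_prod_norm_le:
  assumes "spectral_radius B < \<mu>"
  obtains K where "K \<ge> 0"
    "\<And>w. set w \<subseteq> S \<Longrightarrow> rank_one_letters_distinct w \<Longrightarrow> norm (prod_list_mat w) \<le> K * \<mu> ^ length w"
proof -
  have "\<mu> > 0" using assms spectral_radius_nonneg[of B] by linarith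
  obtain C where C: "\<And>m. norm (matpow B m) \<le> C * \<mu> ^ m"
    using matpow_norm_le_geometric[OF assms] by blast
  have "C \<ge> 0" using order_trans[OF norm_ge_zero C[of 0]] by simp
  define M where "M = (\<Sum>A\<in>S. norm A)"
  have M: "M \<ge> 0" "\<And>A. A \<in> S \<Longrightarrow> norm A \<le> M"
    using member_le_sum[OF _ _ finite_S, of _ norm] by (auto simp: M_def sum_nonneg)
  define D where "D = max 1 (C * M / \<mu>)"
  define K where "K = C * D ^ card S"
  have "K \<ge> 0" using \<open>C \<ge> 0\<close> by (simp add: K_def D_def)
  have "norm (prod_list_mat w) \<le> K * \<mu> ^ length w"
    if w: "set w \<subseteq> S" "rank_one_letters_distinct w" for w
  proof (cases "0 \<in> set w")
    case True
    then show ?thesis using \<open>K \<ge> 0\<close> \<open>\<mu> > 0\<close> by (simp add: prod_list_mat_zero)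
  next
    case False
    define t where "t = length (filter (\<lambda>A. A \<noteq> B) w)"
    have "t \<le> card S"
      unfolding t_def using w False finite_S rank_one_if_nonzero
      by (intro length_filter_le_card) (auto simp: rank_one_letters_distinct_def)
    have "norm (prod_list_mat w) = norm (matpow B 0 ** prod_list_mat w)" by simp
    also have "\<dots> \<le> C * (C * M / \<mu>) ^ t * \<mu> ^ length w"
      unfolding t_def using C \<open>\<mu> > 0\<close> M w(1)
      by (subst add_0[symmetric], intro norm_matpow_mult_prod_list_mat_le) auto
    also have "\<dots> \<le> C * D ^ card S * \<mu> ^ length w"
    proof -
      have "(C * M / \<mu>) ^ t \<le> D ^ t"
        using \<open>C \<ge> 0\<close> M \<open>\<mu> > 0\<close> by (intro power_mono) (auto simp: D_def)
      also have "\<dots> \<le> D ^ card S" using \<open>t \<le> card S\<close> by (intro power_increasing) (auto simp: D_def)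
      finally show ?thesis using \<open>C \<ge> 0\<close> \<open>\<mu> > 0\<close> by (intro mult_right_mono mult_left_mono) auto
    qed
    finally show ?thesis by (simp add: K_def)
  qed
  with \<open>K \<ge> 0\<close> show ?thesis using that by blast
qed

lemma prod_norm_le:
  assumes "spectral_radius B < L"
    and L: "\<And>w. w \<in> admissible_words S \<Longrightarrow> normalized_spectral_radius w \<le> L"
  obtains K where "K \<ge> 0" "\<And>w. set w \<subseteq> S \<Longrightarrow> norm (prod_list_mat w) \<le> K * L ^ length w"
proof -
  obtain K where "K \<ge> 0" and K: "\<And>w. set w \<subseteq> S \<Longrightarrow> rank_one_letters_distinct w
      \<Longrightarrow> norm (prod_list_mat w) \<le> K * L ^ length w"
    using rank_one_letters_distinct_prod_norm_le[OF assms(1)] by blast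
  have "L \<ge> 0" using assms(1) spectral_radius_nonneg[of B] by linarith
  have "set w \<subseteq> S \<Longrightarrow> norm (prod_list_mat w) \<le> K * L ^ length w" for w
  proof (induction w rule: length_induct)
    case (1 w)
    show ?case
    proof (cases "rank_one_letters_distinct w")
      case True
      with K "1.prems" show ?thesis by blast
    next
      case False
      then obtain x y z R where w: "w = x @ R # y @ R # z" and "rank R = 1"
        and "rank_one_letters_distinct (R # y)"
        unfolding rank_one_letters_distinct_def by (rule shortest_repeat_split) blast
      with "1.prems" have "R # y \<in> admissible_words S" by (simp add: admissible_words_def)
      then have "normalized_spectral_radius (R # y) ^ length (R # y) \<le> L ^ length (R # y)"
        using L normalized_spectral_radius_nonneg by (intro power_mono) auto
      then have "spectral_radius (prod_list_mat (R # y)) \<le> L ^ length (R # y)"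
        using normalized_spectral_radius_power[of "R # y"] by simp
      moreover obtain c where c: "prod_list_mat w = scale_mat c (prod_list_mat (x @ R # z))"
        and "cmod c \<le> spectral_radius (prod_list_mat (R # y))"
        unfolding w using \<open>rank R = 1\<close> by (rule prod_list_mat_cut_rank_one_cycle)
      moreover have "norm (prod_list_mat (x @ R # z)) \<le> K * L ^ length (x @ R # z)"
      proof -
        have "length (x @ R # z) < length w" "set (x @ R # z) \<subseteq> S" using "1.prems" w by auto
        with "1.IH" show ?thesis by blast
      qed
      ultimately have "norm (prod_list_mat w) \<le> L ^ length (R # y) * (K * L ^ length (x @ R # z))"
        unfolding c norm_scale_mat using \<open>L \<ge> 0\<close> by (intro mult_mono) auto
      also have "\<dots> = K * L ^ length w" by (simp add: w power_add[symmetric] mult_ac add_ac)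
      finally show ?thesis .
    qed
  qed
  with \<open>K \<ge> 0\<close> show ?thesis using that by blast
qed

lemma normalized_spectral_radius_eventually_less:
  assumes "spectral_radius B < t"
  obtains n0 where
    "\<And>v. v \<in> admissible_words S \<Longrightarrow> n0 \<le> length v \<Longrightarrow> normalized_spectral_radius v < t"
proof -
  define \<mu> where "\<mu> = (spectral_radius B + t) / 2"
  have \<mu>: "spectral_radius B < \<mu>" "\<mu> < t" "\<mu> > 0"
    using assms spectral_radius_nonneg[of B] by (auto simp: \<mu>_def)
  obtain K where K: "\<And>w. set w \<subseteq> S \<Longrightarrow> rank_one_letters_distinct w
      \<Longrightarrow> norm (prod_list_mat w) \<le> K * \<mu> ^ length w"
    using rank_one_letters_distinct_prod_norm_le[OF \<mu>(1)] by blast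
  have "t / \<mu> > 1" using \<mu> by simp
  then obtain n0 where n0: "K < (t / \<mu>) ^ n0" using real_arch_pow by blast
  have "normalized_spectral_radius v < t" if v: "v \<in> admissible_words S" "n0 \<le> length v" for v
  proof -
    have "K < (t / \<mu>) ^ length v"
      using n0 power_increasing[OF v(2), of "t / \<mu>"] \<open>t / \<mu> > 1\<close> by linarith
    then have "K * \<mu> ^ length v < t ^ length v"
      using \<mu> by (simp add: power_divide pos_less_divide_eq)
    moreover have "normalized_spectral_radius v ^ length v \<le> K * \<mu> ^ length v"
    proof -
      have "normalized_spectral_radius v ^ length v = spectral_radius (prod_list_mat v)"
        using v by (intro normalized_spectral_radius_power) (simp add: admissible_words_def)
      also have "\<dots> \<le> norm (prod_list_mat v)" by (rule spectral_radius_le_norm)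
      also have "\<dots> \<le> K * \<mu> ^ length v" using v K by (simp add: admissible_words_def)
      finally show ?thesis .
    qed
    ultimately have "normalized_spectral_radius v ^ length v < t ^ length v" by linarith
    then show ?thesis by (rule power_less_imp_less_base) (use \<mu> in auto)
  qed
  then show ?thesis by (rule that)
qed

lemma ex_max_normalized_spectral_radius:
  obtains w where "w \<in> admissible_words S"
    "\<And>v. v \<in> admissible_words S \<Longrightarrow> normalized_spectral_radius v \<le> normalized_spectral_radius w"
proof (cases "\<forall>v\<in>admissible_words S. normalized_spectral_radius v \<le> spectral_radius B")
  case True
  then show ?thesis by (intro that[OF B_admissible]) auto
next
  case False
  then obtain w1 where w1: "w1 \<in> admissible_words S"
    "spectral_radius B < normalized_spectral_radius w1"
    by (auto simp: not_le)
  obtain n0 where n0: "\<And>v. v \<in> admissible_words S \<Longrightarrow> n0 \<le> length v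
      \<Longrightarrow> normalized_spectral_radius v < normalized_spectral_radius w1"
    using normalized_spectral_radius_eventually_less[OF w1(2)] by blast
  define F where "F = {v \<in> admissible_words S. length v < n0}"
  have "finite F"
    by (rule finite_subset[OF _ finite_lists_length_le[OF finite_S, of n0]])
      (auto simp: F_def admissible_words_def)
  moreover have "w1 \<in> F"
    using n0[OF w1(1)] w1(1) by (cases "n0 \<le> length w1") (auto simp: F_def)
  ultimately have "Max (normalized_spectral_radius ` F) \<in> normalized_spectral_radius ` F"
    by (intro Max_in) auto
  then obtain w where "w \<in> F" and w: "normalized_spectral_radius w = Max (normalized_spectral_radius ` F)"
    by auto
  have F_le: "normalized_spectral_radius v \<le> normalized_spectral_radius w" if "v \<in> F" for v
    unfolding w using \<open>finite F\<close> that by (intro Max_ge) auto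
  have "normalized_spectral_radius v \<le> normalized_spectral_radius w" if "v \<in> admissible_words S" for v
  proof (cases "length v < n0")
    case True
    with that F_le show ?thesis by (simp add: F_def)
  next
    case False
    then have "normalized_spectral_radius v < normalized_spectral_radius w1"
      using n0 that by simp
    also have "\<dots> \<le> normalized_spectral_radius w" using \<open>w1 \<in> F\<close> by (rule F_le)
    finally show ?thesis by simp
  qed
  moreover have "w \<in> admissible_words S" using \<open>w \<in> F\<close> by (simp add: F_def)
  ultimately show ?thesis using that by blast
qed

lemma joint_spectral_radius_eq_max:
  assumes w: "w \<in> admissible_words S"
    and max: "\<And>v. v \<in> admissible_words S \<Longrightarrow> normalized_spectral_radius v \<le> normalized_spectral_radius w"
  shows "joint_spectral_radius S = normalized_spectral_radius w"
proof (rule joint_spectral_radius_eqI[OF finite_S _ normalized_spectral_radius_nonneg])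
  show "S \<noteq> {}" using B_in_S by blast
next
  fix L assume L: "normalized_spectral_radius w < L"
  moreover have "spectral_radius B \<le> normalized_spectral_radius w"
    using max[OF B_admissible] by simp
  ultimately have "spectral_radius B < L" by linarith
  moreover have "normalized_spectral_radius v \<le> L" if "v \<in> admissible_words S" for v
    using max[OF that] L by linarith
  ultimately obtain K where "K \<ge> 0" "\<And>w. set w \<subseteq> S \<Longrightarrow> norm (prod_list_mat w) \<le> K * L ^ length w"
    using prod_norm_le by blast
  then show "\<exists>K\<ge>0. \<forall>ms. set ms \<subseteq> S \<longrightarrow> norm (prod_list_mat ms) \<le> K * L ^ length ms" by blast
next
  assume "normalized_spectral_radius w > 0"
  with w obtain c where "c > 0" "\<And>n. \<exists>u. length u = n \<and> set u \<subseteq> S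
      \<and> c * normalized_spectral_radius w ^ n \<le> norm (prod_list_mat u)"
    using prod_norm_ge_powers[OF finite_S] by (auto simp: admissible_words_def)
  then show "\<exists>c>0. \<forall>n. \<exists>ms. length ms = n \<and> set ms \<subseteq> S
      \<and> c * normalized_spectral_radius w ^ n \<le> norm (prod_list_mat ms)" by blast
qed

end

lemma ex_all_but_one_rank_le_one:
  fixes S :: "(complex^'d^'d) set"
  assumes "finite S" "S \<noteq> {}" "\<forall>A\<in>S. \<forall>B\<in>S. rank A \<ge> 2 \<and> rank B \<ge> 2 \<longrightarrow> A = B"
  obtains B where "all_but_one_rank_le_one S B"
proof (cases "\<exists>B\<in>S. rank B \<ge> 2")
  case True
  then obtain B where B: "B \<in> S" "rank B \<ge> 2" by blast
  have "rank A \<le> 1" if "A \<in> S" "A \<noteq> B" for A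
  proof (rule ccontr)
    assume "\<not> rank A \<le> 1"
    with assms(3) B that show False by auto
  qed
  with assms(1) B(1) show ?thesis by (intro that) unfold_locales
next
  case False
  obtain B where "B \<in> S" using assms(2) by blast
  with assms(1) False show ?thesis by (intro that) (unfold_locales, auto)
qed

theorem corollary3:
  fixes S :: "(complex^'d^'d) set"
  assumes "finite S" and "S \<noteq> {}"
    and "\<forall>A\<in>S. \<forall>B\<in>S. rank A \<ge> 2 \<and> rank B \<ge> 2 \<longrightarrow> A = B"
  shows "\<exists>ms. length ms \<ge> 1 \<and> set ms \<subseteq> S
            \<and> (\<forall>A\<in>S. rank A = 1 \<longrightarrow> count_list ms A \<le> 1)
            \<and> joint_spectral_radius S = root (length ms) (spectral_radius (prod_list_mat ms))"
proof -
  obtain B where "all_but_one_rank_le_one S B" using ex_all_but_one_rank_le_one[OF assms] by blast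
  then interpret all_but_one_rank_le_one S B .
  obtain w where w: "w \<in> admissible_words S"
    "\<And>v. v \<in> admissible_words S \<Longrightarrow> normalized_spectral_radius v \<le> normalized_spectral_radius w"
    using ex_max_normalized_spectral_radius by blast
  then have "joint_spectral_radius S = normalized_spectral_radius w"
    by (rule joint_spectral_radius_eq_max)
  moreover have "\<forall>A\<in>S. rank A = 1 \<longrightarrow> count_list w A \<le> 1"
    using w(1) unfolding admissible_words_def rank_one_letters_distinct_def
    by (metis (mono_tags, lifting) count_notin mem_Collect_eq zero_le)
  ultimately show ?thesis
    using w(1) by (auto simp: admissible_words_def normalized_spectral_radius_def Suc_le_eq)
qed

end
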